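(* Let $(V,\|\cdot\|)$ be a normed plane, let $x,y\in V$ be distinct, and suppose there is a line $l$ with $l\subseteq\mathrm{bis}(x,y)$. Then for any nondegenerate segment $[zw]\subseteq l$ whose midpoint is $\frac{x+y}{2}$, we have $\langle xy\rangle\subseteq\mathrm{bis}(z,w)$.
   Context: A normed (Minkowski) plane $(V,\|\cdot\|)$ is a two-dimensional real vector space with a norm. For $x,y\in V$, $[xy]$ denotes the closed segment and $\langle xy\rangle$ the line through $x,y$. For distinct $x,y$, $\mathrm{bis}(x,y)=\{z\in V:\|z-x\|=\|z-y\|\}$. *)

theory Defs
  imports "HOL-Analysis.Analysis"
begin

definition bis :: "'a::real_normed_vector \<Rightarrow> 'a \<Rightarrow> 'a set" where
  "bis x y = {z. norm (z - x) = norm (z - y)}"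

definition line_through :: "'a::real_normed_vector \<Rightarrow> 'a \<Rightarrow> 'a set" where
  "line_through a b = {a + t *\<^sub>R (b - a) | t. True}"

definition is_line :: "'a::real_normed_vector set \<Rightarrow> bool" where
  "is_line l \<longleftrightarrow> (\<exists>a b. a \<noteq> b \<and> l = line_through a b)"

end

theory Submission
  imports Defs
begin

text \<open>
  Put \<open>m = (x + y)/2 = (z + w)/2\<close>, \<open>v = (y - x)/2\<close> and \<open>u = (w - z)/2\<close>. In these centred
  coordinates \<open>l \<subseteq> bis x y\<close> says \<open>\<parallel>t u + v\<parallel> = \<parallel>t u - v\<parallel>\<close> for every real \<open>t\<close>, and the
  conclusion says \<open>\<parallel>s v + u\<parallel> = \<parallel>s v - u\<parallel>\<close> for every real \<open>s\<close>. The latter follows from the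
  former with \<open>t = 1/s\<close> by homogeneity of the norm.
\<close>

lemma norm_add_eq_norm_diff_swap:
  fixes u v :: "'a::real_normed_vector"
  assumes "\<And>t. norm (t *\<^sub>R u + v) = norm (t *\<^sub>R u - v)"
  shows "norm (s *\<^sub>R v + u) = norm (s *\<^sub>R v - u)"
proof (cases "s = 0")
  case True
  then show ?thesis by (simp add: norm_minus_commute)
next
  case False
  have "norm (s *\<^sub>R v + u) = norm (s *\<^sub>R ((1/s) *\<^sub>R u + v))"
    using False by (simp add: algebra_simps)
  also have "\<dots> = \<bar>s\<bar> * norm ((1/s) *\<^sub>R u - v)"
    using assms by simp
  also have "\<dots> = norm (s *\<^sub>R ((1/s) *\<^sub>R u - v))"
    by simp
  also have "\<dots> = norm (s *\<^sub>R v - u)"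
    using False by (simp add: algebra_simps norm_minus_commute)
  finally show ?thesis .
qed

lemma line_through_centred: "line_through (m - v) (m + v) = range (\<lambda>s. m + s *\<^sub>R v)"
proof -
  have diff: "m + v - (m - v) = 2 *\<^sub>R v"
    by (simp add: scaleR_2)
  have to_centred: "m - v + t *\<^sub>R (m + v - (m - v)) = m + (2 * t - 1) *\<^sub>R v" for t
  proof -
    have "t *\<^sub>R (m + v - (m - v)) = (2 * t) *\<^sub>R v"
      unfolding diff by simp
    then show ?thesis
      by (simp add: algebra_simps)
  qed
  have from_centred: "m + s *\<^sub>R v = m - v + ((s + 1) / 2) *\<^sub>R (m + v - (m - v))" for s
  proof -
    have "((s + 1) / 2) *\<^sub>R (m + v - (m - v)) = (s + 1) *\<^sub>R v"
      unfolding diff by simp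
    then show ?thesis
      by (simp add: algebra_simps)
  qed
  show ?thesis
    unfolding line_through_def
  proof (intro set_eqI iffI)
    fix p
    assume "p \<in> {m - v + t *\<^sub>R (m + v - (m - v)) | t. True}"
    then obtain t where "p = m - v + t *\<^sub>R (m + v - (m - v))"
      by blast
    then show "p \<in> range (\<lambda>s. m + s *\<^sub>R v)"
      unfolding to_centred by (rule range_eqI)
  next
    fix p
    assume "p \<in> range (\<lambda>s. m + s *\<^sub>R v)"
    then obtain s where "p = m + s *\<^sub>R v"
      by blast
    then show "p \<in> {m - v + t *\<^sub>R (m + v - (m - v)) | t. True}"
      unfolding from_centred by blast
  qed
qed

lemma line_through_subset:
  assumes "z \<in> line_through a b" "w \<in> line_through a b"
  shows "line_through z w \<subseteq> line_through a b"
proof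
  fix p
  assume "p \<in> line_through z w"
  then obtain t where p: "p = z + t *\<^sub>R (w - z)"
    unfolding line_through_def by blast
  obtain r s where z: "z = a + r *\<^sub>R (b - a)" and w: "w = a + s *\<^sub>R (b - a)"
    using assms unfolding line_through_def by blast
  have "p = a + (r + t * (s - r)) *\<^sub>R (b - a)"
    unfolding p z w by (simp add: algebra_simps)
  then show "p \<in> line_through a b"
    unfolding line_through_def by blast
qed

lemma bis_centred: "m + p \<in> bis (m - v) (m + v) \<longleftrightarrow> norm (p + v) = norm (p - v)"
  unfolding bis_def by (simp add: algebra_simps)

lemma midpoint_centred_form:
  fixes x y :: "'a::real_normed_vector"
  shows "x = midpoint x y - (1/2) *\<^sub>R (y - x)" "y = midpoint x y + (1/2) *\<^sub>R (y - x)"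
  unfolding midpoint_def by (simp_all add: algebra_simps flip: scaleR_add_left)

theorem lemma2p2:
  fixes x y z w :: "'a::real_normed_vector" and l :: "'a set"
  assumes plane: "dim (UNIV :: 'a set) = 2"
    and xy: "x \<noteq> y"
    and l: "is_line l" "l \<subseteq> bis x y"
    and zw: "z \<noteq> w" "closed_segment z w \<subseteq> l"
    and mid: "midpoint z w = midpoint x y"
  shows "line_through x y \<subseteq> bis z w"
proof -
  define m where "m = midpoint x y"
  define v where "v = (1/2) *\<^sub>R (y - x)"
  define u where "u = (1/2) *\<^sub>R (w - z)"
  have xy_m: "x = m - v" "y = m + v"
    unfolding m_def v_def by (fact midpoint_centred_form)+
  have zw_m: "z = m - u" "w = m + u"
    unfolding m_def u_def mid[symmetric] by (fact midpoint_centred_form)+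
  obtain a b where "l = line_through a b"
    using l(1) unfolding is_line_def by blast
  moreover have "z \<in> l" "w \<in> l"
    using zw(2) by auto
  ultimately have "line_through z w \<subseteq> l"
    using line_through_subset by blast
  then have "range (\<lambda>t. m + t *\<^sub>R u) \<subseteq> bis (m - v) (m + v)"
    using l(2) line_through_centred[of m u] by (simp add: xy_m zw_m)
  then have "norm (t *\<^sub>R u + v) = norm (t *\<^sub>R u - v)" for t
    using bis_centred by blast
  then have "norm (s *\<^sub>R v + u) = norm (s *\<^sub>R v - u)" for s
    by (rule norm_add_eq_norm_diff_swap)
  then show ?thesis
    using line_through_centred[of m v] bis_centred[of m _ u] by (auto simp: xy_m zw_m)
qed

end
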